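(* Let $R$ be a commutative Noetherian ring of prime characteristic $p$ and $G$ an $x$-torsion-free left $R[x,f]$-module. Then there is an order-reversing bijection $\Delta:\mathcal{A}(G)\to\mathcal{I}(G)$ given by $\Delta(N)=(\operatorname{grann}_{R[x,f]}N)\cap R=(0:_RN)$, whose inverse (also order-reversing) is $\mathfrak{b}\mapsto\operatorname{ann}_G(\mathfrak{b}R[x,f])$.
   Context: $R[x,f]$ is the Frobenius skew polynomial ring: free left $R$-module on $(x^i)_{i\ge0}$, $xr=r^px$; $\mathfrak{b}R[x,f]=\bigoplus_n\mathfrak{b}x^n$. $x$-torsion-free: $xg=0\Rightarrow g=0$. Graded two-sided ideals of $R[x,f]$ are $\bigoplus_n\mathfrak{b}_nx^n$ with $(\mathfrak{b}_n)$ ascending chains of ideals. $\operatorname{ann}_G\mathfrak{B}=\{g:\theta g=0\ \forall\theta\in\mathfrak{B}\}$; $\mathcal{A}(G)$ is the set of special annihilator submodules, i.e. those of the form $\operatorname{ann}_G\mathfrak{B}$ with $\mathfrak{B}$ a graded two-sided ideal. $\operatorname{grann}_{R[x,f]}N$ is the set of $\sum r_ix^i$ with each $r_ix^i$ annihilating $N$. $\mathcal{I}(G)$ is the set of ideals $\mathfrak{b}$ of $R$ for which there is an $R[x,f]$-submodule $N$ of $G$ with $\operatorname{grann}_{R[x,f]}N=\mathfrak{b}R[x,f]$. *)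

theory Defs
  imports "HOL-Computational_Algebra.Polynomial" "HOL-Computational_Algebra.Primes"
begin

definition is_ideal :: "'r::comm_ring_1 set \<Rightarrow> bool" where
  "is_ideal I \<longleftrightarrow> 0 \<in> I \<and> (\<forall>a\<in>I. \<forall>b\<in>I. a + b \<in> I) \<and> (\<forall>r a. a \<in> I \<longrightarrow> r * a \<in> I)"

definition noetherian_ring :: "'r::comm_ring_1 itself \<Rightarrow> bool" where
  "noetherian_ring _ \<longleftrightarrow>
     (\<forall>I :: nat \<Rightarrow> 'r set. (\<forall>n. is_ideal (I n)) \<and> (\<forall>n. I n \<subseteq> I (Suc n))
        \<longrightarrow> (\<exists>m. \<forall>n\<ge>m. I n = I m))"

(* The Frobenius skew polynomial ring R[x,f]: an element sum r_i x^i is represented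
   by the polynomial with coefficients r_i (only the additive structure of 'r poly is used).
   Its multiplication is the skew one: (a x^i)(b x^j) = a b^(p^i) x^(i+j), p = char R. *)
definition skmult :: "'r::comm_ring_1 poly \<Rightarrow> 'r poly \<Rightarrow> 'r poly" where
  "skmult a b = (\<Sum>i\<le>degree a. \<Sum>j\<le>degree b.
       monom (coeff a i * coeff b j ^ (CHAR('r) ^ i)) (i + j))"

definition xvar :: "'r::comm_ring_1 poly" where "xvar = monom 1 1"

definition frob_module :: "('r::comm_ring_1 poly \<Rightarrow> 'g::ab_group_add \<Rightarrow> 'g) \<Rightarrow> bool" where
  "frob_module act \<longleftrightarrow>
     (\<forall>a b g. act (a + b) g = act a g + act b g) \<and>
     (\<forall>a g h. act a (g + h) = act a g + act a h) \<and>
     (\<forall>a b g. act (skmult a b) g = act a (act b g)) \<and>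
     (\<forall>g. act 1 g = g)"

definition x_torsion_free :: "('r::comm_ring_1 poly \<Rightarrow> 'g::ab_group_add \<Rightarrow> 'g) \<Rightarrow> bool" where
  "x_torsion_free act \<longleftrightarrow> (\<forall>g. act xvar g = 0 \<longrightarrow> g = 0)"

definition submodule :: "('r::comm_ring_1 poly \<Rightarrow> 'g::ab_group_add \<Rightarrow> 'g) \<Rightarrow> 'g set \<Rightarrow> bool" where
  "submodule act N \<longleftrightarrow> 0 \<in> N \<and> (\<forall>g\<in>N. \<forall>h\<in>N. g + h \<in> N) \<and> (\<forall>a. \<forall>g\<in>N. act a g \<in> N)"

definition twosided_ideal :: "'r::comm_ring_1 poly set \<Rightarrow> bool" where
  "twosided_ideal B \<longleftrightarrow> 0 \<in> B \<and> (\<forall>a\<in>B. \<forall>b\<in>B. a + b \<in> B) \<and>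
     (\<forall>a\<in>B. \<forall>c. skmult c a \<in> B \<and> skmult a c \<in> B)"

definition graded_ideal :: "'r::comm_ring_1 poly set \<Rightarrow> bool" where
  "graded_ideal B \<longleftrightarrow> twosided_ideal B \<and> (\<forall>a\<in>B. \<forall>n. monom (coeff a n) n \<in> B)"

(* b R[x,f] = direct sum of b x^n *)
definition extideal :: "'r::comm_ring_1 set \<Rightarrow> 'r poly set" where
  "extideal b = {a. \<forall>n. coeff a n \<in> b}"

definition annG :: "('r::comm_ring_1 poly \<Rightarrow> 'g::ab_group_add \<Rightarrow> 'g) \<Rightarrow> 'r poly set \<Rightarrow> 'g set" where
  "annG act B = {g. \<forall>\<theta>\<in>B. act \<theta> g = 0}"

definition grann :: "('r::comm_ring_1 poly \<Rightarrow> 'g::ab_group_add \<Rightarrow> 'g) \<Rightarrow> 'g set \<Rightarrow> 'r poly set" where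
  "grann act N = {a. \<forall>i. \<forall>g\<in>N. act (monom (coeff a i) i) g = 0}"

(* (0 :_R N), R embedded in R[x,f] as degree-0 elements *)
definition annR :: "('r::comm_ring_1 poly \<Rightarrow> 'g::ab_group_add \<Rightarrow> 'g) \<Rightarrow> 'g set \<Rightarrow> 'r set" where
  "annR act N = {r. \<forall>g\<in>N. act [:r:] g = 0}"

definition specAnn :: "('r::comm_ring_1 poly \<Rightarrow> 'g::ab_group_add \<Rightarrow> 'g) \<Rightarrow> 'g set set" where
  "specAnn act = {annG act B | B. graded_ideal B}"

definition idealsI :: "('r::comm_ring_1 poly \<Rightarrow> 'g::ab_group_add \<Rightarrow> 'g) \<Rightarrow> 'r set set" where
  "idealsI act = {b. is_ideal b \<and> (\<exists>N. submodule act N \<and> grann act N = extideal b)}"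

end

theory Submission
  imports Defs
begin

text \<open>
  As \<open>x\<^sup>i r = r\<^bsup>p\<^sup>i\<^esup> x\<^sup>i\<close> is a left multiple of \<open>r x\<^sup>i\<close>, from \<open>r x\<^sup>i g = 0\<close> we get \<open>x\<^sup>i (r g) = 0\<close>, hence
  \<open>r g = 0\<close> when \<open>G\<close> is \<open>x\<close>-torsion-free. So the graded annihilator of every submodule \<open>N\<close>
  is \<open>(0 :\<^sub>R N) R[x,f]\<close>. For \<open>N = ann\<^sub>G \<B>\<close> with \<open>\<B>\<close> graded this gives
  \<open>\<B> \<subseteq> grann N = (0 :\<^sub>R N) R[x,f]\<close>, so \<open>ann\<^sub>G ((0 :\<^sub>R N) R[x,f]) \<subseteq> N\<close>; the other inclusions
  making \<open>\<Delta>\<close> and \<open>b \<mapsto> ann\<^sub>G (b R[x,f])\<close> mutually inverse are formal, and both maps are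
  evidently inclusion-reversing.
\<close>

lemma antimono_inverse_le_iff:
  fixes f :: "'a::order \<Rightarrow> 'b::order" and g :: "'b \<Rightarrow> 'a"
  assumes "antimono f" "antimono g" "g (f x) = x" "g (f y) = y"
  shows "x \<le> y \<longleftrightarrow> f y \<le> f x"
  by (metis assms antimonoD)

lemma is_ideal_sum:
  assumes "is_ideal b" "\<And>x. x \<in> A \<Longrightarrow> f x \<in> b"
  shows "sum f A \<in> b"
proof (cases "finite A")
  case True
  then show ?thesis using assms(2)
    by (induction A rule: finite_induct) (use assms(1) in \<open>auto simp: is_ideal_def\<close>)
next
  case False
  then show ?thesis using assms(1) by (simp add: is_ideal_def)
qed

lemma is_ideal_mult_right: "is_ideal b \<Longrightarrow> x \<in> b \<Longrightarrow> x * y \<in> b"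
  by (metis is_ideal_def mult.commute)

lemma is_ideal_power: "is_ideal b \<Longrightarrow> x \<in> b \<Longrightarrow> n > 0 \<Longrightarrow> x ^ n \<in> b"
  by (metis is_ideal_mult_right gr0_conv_Suc power_Suc)

lemma const_mem_extideal_iff: "0 \<in> b \<Longrightarrow> [:r:] \<in> extideal b \<longleftrightarrow> r \<in> b"
  unfolding extideal_def by (auto simp: coeff_pCons split: nat.splits)

text \<open>Zero coefficients contribute nothing to \<^const>\<open>skmult\<close> only because
  \<open>0 ^ CHAR('r) ^ i = 0\<close>, which needs \<open>CHAR('r) > 0\<close>.\<close>

lemma skmult_eq_sum_le:
  fixes a b :: "'r::comm_ring_1 poly"
  assumes "CHAR('r) > 0" "degree a \<le> m" "degree b \<le> n"
  shows "skmult a b = (\<Sum>i\<le>m. \<Sum>j\<le>n. monom (coeff a i * coeff b j ^ (CHAR('r) ^ i)) (i + j))"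
proof -
  have inner: "(\<Sum>j\<le>n. monom (coeff a i * coeff b j ^ (CHAR('r) ^ i)) (i + j))
      = (\<Sum>j\<le>degree b. monom (coeff a i * coeff b j ^ (CHAR('r) ^ i)) (i + j))" for i
    by (rule sum.mono_neutral_right) (use assms in \<open>auto simp: coeff_eq_0 power_0_left\<close>)
  have "(\<Sum>i\<le>m. \<Sum>j\<le>n. monom (coeff a i * coeff b j ^ (CHAR('r) ^ i)) (i + j))
      = (\<Sum>i\<le>degree a. \<Sum>j\<le>n. monom (coeff a i * coeff b j ^ (CHAR('r) ^ i)) (i + j))"
    by (rule sum.mono_neutral_right) (use assms in \<open>auto simp: coeff_eq_0\<close>)
  then show ?thesis unfolding skmult_def inner by simp
qed

lemma skmult_monom:
  fixes r s :: "'r::comm_ring_1"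
  assumes "CHAR('r) > 0"
  shows "skmult (monom r i) (monom s j) = monom (r * s ^ (CHAR('r) ^ i)) (i + j)"
proof -
  have "monom (coeff (monom r i) i' * coeff (monom s j) j' ^ (CHAR('r) ^ i')) (i' + j')
      = (if j' = j then if i' = i then monom (r * s ^ (CHAR('r) ^ i)) (i + j) else 0 else 0)" for i' j'
    using assms by (auto simp: coeff_monom power_0_left)
  then show ?thesis
    by (simp add: skmult_eq_sum_le[OF assms degree_monom_le degree_monom_le])
qed

lemma graded_ideal_extideal:
  fixes b :: "'r::comm_ring_1 set"
  assumes b: "is_ideal b" and ch: "CHAR('r) > 0"
  shows "graded_ideal (extideal b)"
proof -
  have "0 \<in> b" using b by (simp add: is_ideal_def)
  moreover have "c * y ^ (CHAR('r) ^ i) \<in> b" if "y \<in> b" for c y :: 'r and i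
    using b that ch is_ideal_power[of b y "CHAR('r) ^ i"] by (simp add: is_ideal_def)
  ultimately show ?thesis
    using b unfolding graded_ideal_def twosided_ideal_def skmult_def extideal_def
    by (auto simp: coeff_sum coeff_monom is_ideal_def
        intro!: is_ideal_sum[OF b] is_ideal_mult_right[OF b])
qed

lemma graded_ideal_subset_grann_annG: "graded_ideal B \<Longrightarrow> B \<subseteq> grann act (annG act B)"
  by (auto simp: graded_ideal_def grann_def annG_def)

lemma antimono_annG: "antimono (annG act)"
  unfolding annG_def by (rule antimonoI) blast

lemma antimono_annR: "antimono (annR act)"
  unfolding annR_def by (rule antimonoI) blast

lemma antimono_annG_extideal: "antimono (\<lambda>b. annG act (extideal b))"
  by (auto intro!: antimonoI simp: annG_def extideal_def)

context
  fixes act :: "'r::comm_ring_1 poly \<Rightarrow> 'g::ab_group_add \<Rightarrow> 'g"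
  assumes module: "frob_module act" and char_pos: "CHAR('r) > 0"
begin

lemma act_add_left: "act (a + b) g = act a g + act b g"
  using module by (simp add: frob_module_def)

lemma act_add_right: "act a (g + h) = act a g + act a h"
  using module by (simp add: frob_module_def)

lemma act_skmult: "act (skmult a b) g = act a (act b g)"
  using module by (simp add: frob_module_def)

lemma act_one: "act 1 g = g"
  using module by (simp add: frob_module_def)

lemma act_zero_left [simp]: "act 0 g = 0"
  using act_add_left[of 0 0 g] by simp

lemma act_zero_right [simp]: "act a 0 = 0"
  using act_add_right[of a 0 0] by simp

lemma act_sum: "act (sum f A) g = (\<Sum>x\<in>A. act (f x) g)"
proof (cases "finite A")
  case True
  then show ?thesis by (induction A rule: finite_induct) (auto simp: act_add_left)
qed simp

lemma act_eq_sum_monom: "act \<theta> g = (\<Sum>i\<le>degree \<theta>. act (monom (coeff \<theta> i) i) g)"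
  using act_sum[of "\<lambda>i. monom (coeff \<theta> i) i" "{..degree \<theta>}" g]
  by (simp add: poly_as_sum_of_monoms)

lemma act_monom: "act (monom r i) g = act [:r:] (act (monom 1 i) g)"
  using skmult_monom[OF char_pos, of r 0 1 i] act_skmult[of "monom r 0" "monom 1 i" g]
  by (simp add: monom_0)

lemma act_const_mult: "act [:r * s:] g = act [:r:] (act [:s:] g)"
  using skmult_monom[OF char_pos, of r 0 s 0] act_skmult[of "monom r 0" "monom s 0" g]
  by (simp add: monom_0)

lemma act_const_add: "act [:r + s:] g = act [:r:] g + act [:s:] g"
  using act_add_left[of "[:r:]" "[:s:]" g] by simp

lemma act_xpow_const:
  "act (monom 1 i) (act [:r:] g) = act [:r ^ (CHAR('r) ^ i):] (act (monom 1 i) g)"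
  using skmult_monom[OF char_pos, of 1 i r 0] skmult_monom[OF char_pos, of "r ^ (CHAR('r) ^ i)" 0 1 i]
    act_skmult[of "monom 1 i" "monom r 0" g] act_skmult[of "monom (r ^ (CHAR('r) ^ i)) 0" "monom 1 i" g]
  by (simp add: monom_0)

lemma act_xpow_Suc: "act (monom 1 (Suc i)) g = act xvar (act (monom 1 i) g)"
  using skmult_monom[OF char_pos, of 1 1 1 i] act_skmult[of "monom 1 1" "monom 1 i" g]
  by (simp add: xvar_def)

lemma annR_ideal: "is_ideal (annR act N)"
  by (auto simp: is_ideal_def annR_def act_const_add act_const_mult)

lemma annR_eq_const_grann: "annR act N = {r. [:r:] \<in> grann act N}"
proof -
  have "act (monom (coeff [:r:] i) i) g = (if i = 0 then act [:r:] g else 0)" for r i g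
    by (cases i) (auto simp: monom_0)
  then show ?thesis unfolding annR_def grann_def by auto
qed

lemma subset_annG_grann: "N \<subseteq> annG act (grann act N)"
proof (intro subsetI, unfold annG_def, intro CollectI ballI)
  fix g \<theta> assume "g \<in> N" "\<theta> \<in> grann act N"
  then have "act (monom (coeff \<theta> i) i) g = 0" for i
    by (simp add: grann_def)
  then show "act \<theta> g = 0"
    by (subst act_eq_sum_monom) simp
qed

lemma submodule_annG: "twosided_ideal B \<Longrightarrow> submodule act (annG act B)"
  unfolding submodule_def annG_def twosided_ideal_def
  by (auto simp: act_add_right act_skmult[symmetric])

lemma specAnn_submodule: "N \<in> specAnn act \<Longrightarrow> submodule act N"
  unfolding specAnn_def graded_ideal_def using submodule_annG by blast

context
  assumes torsion_free: "x_torsion_free act"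
begin

lemma act_xpow_eq_0D: "act (monom 1 i) g = 0 \<Longrightarrow> g = 0"
proof (induction i)
  case 0
  then show ?case using act_one by (simp add: one_pCons monom_0)
next
  case (Suc i)
  then show ?case using torsion_free act_xpow_Suc unfolding x_torsion_free_def by metis
qed

lemma act_const_eq_0_if_act_monom_eq_0:
  assumes "act (monom r i) g = 0"
  shows "act [:r:] g = 0"
proof -
  obtain k where k: "CHAR('r) ^ i = Suc k"
    using char_pos by (metis gr0_conv_Suc zero_less_power)
  have "act (monom 1 i) (act [:r:] g) = act [:r ^ k * r:] (act (monom 1 i) g)"
    using act_xpow_const k by (simp add: mult.commute)
  also have "\<dots> = act [:r ^ k:] (act (monom r i) g)"
    by (simp only: act_const_mult act_monom[of r i g])
  also have "\<dots> = 0"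
    using assms by simp
  finally show ?thesis
    by (rule act_xpow_eq_0D)
qed

lemma grann_eq_extideal_annR:
  assumes N: "submodule act N"
  shows "grann act N = extideal (annR act N)"
proof (intro equalityI subsetI)
  fix a assume a: "a \<in> grann act N"
  have "act [:coeff a n:] g = 0" if "g \<in> N" for n g
    by (rule act_const_eq_0_if_act_monom_eq_0[of _ n]) (use a that in \<open>simp add: grann_def\<close>)
  then show "a \<in> extideal (annR act N)"
    by (simp add: extideal_def annR_def)
next
  fix a assume a: "a \<in> extideal (annR act N)"
  have "act (monom (coeff a i) i) g = 0" if "g \<in> N" for g i
  proof -
    have "act (monom 1 i) g \<in> N"
      using N that by (simp add: submodule_def)
    then show ?thesis
      using a act_monom[of "coeff a i" i g] by (simp add: extideal_def annR_def)
  qed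
  then show "a \<in> grann act N"
    by (simp add: grann_def)
qed

lemma annG_extideal_annR:
  assumes N: "N \<in> specAnn act"
  shows "annG act (extideal (annR act N)) = N"
proof
  obtain B where B: "graded_ideal B" and N_eq: "N = annG act B"
    using N unfolding specAnn_def by blast
  have grann_N: "grann act N = extideal (annR act N)"
    using grann_eq_extideal_annR[OF specAnn_submodule[OF N]] .
  have "B \<subseteq> extideal (annR act N)"
    using graded_ideal_subset_grann_annG[OF B, of act] grann_N N_eq by simp
  then show "annG act (extideal (annR act N)) \<subseteq> N"
    using antimonoD[OF antimono_annG] N_eq by blast
  show "N \<subseteq> annG act (extideal (annR act N))"
    using subset_annG_grann[of N] grann_N by simp
qed

lemma annR_mem_idealsI: "N \<in> specAnn act \<Longrightarrow> annR act N \<in> idealsI act"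
  unfolding idealsI_def
  using annR_ideal specAnn_submodule grann_eq_extideal_annR by blast

end

lemma annR_annG_extideal:
  assumes b: "b \<in> idealsI act"
  shows "annR act (annG act (extideal b)) = b"
proof
  obtain N where "is_ideal b" and N: "grann act N = extideal b"
    using b unfolding idealsI_def by blast
  then have "0 \<in> b"
    by (simp add: is_ideal_def)
  then have const_iff: "[:r:] \<in> extideal b \<longleftrightarrow> r \<in> b" for r
    by (rule const_mem_extideal_iff)
  have "annR act (annG act (extideal b)) \<subseteq> annR act N"
    using antimonoD[OF antimono_annR subset_annG_grann[of N]] N by simp
  also have "\<dots> = b"
    using annR_eq_const_grann[of N] N const_iff by simp
  finally show "annR act (annG act (extideal b)) \<subseteq> b" .
  show "b \<subseteq> annR act (annG act (extideal b))"
    unfolding annR_def annG_def using const_iff by blast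
qed

lemma annG_extideal_mem_specAnn: "b \<in> idealsI act \<Longrightarrow> annG act (extideal b) \<in> specAnn act"
  unfolding specAnn_def idealsI_def using graded_ideal_extideal char_pos by blast

end

theorem proposition1p11:
  fixes act :: "'r::comm_ring_1 poly \<Rightarrow> 'g::ab_group_add \<Rightarrow> 'g"
    and p :: nat
  assumes "noetherian_ring TYPE('r)"
    and "prime p" and "CHAR('r) = p"
    and "frob_module act"
    and "x_torsion_free act"
  shows "bij_betw (annR act) (specAnn act) (idealsI act)
    \<and> (\<forall>N\<in>specAnn act. annR act N = {r. [:r:] \<in> grann act N})
    \<and> (\<forall>N\<in>specAnn act. annG act (extideal (annR act N)) = N)
    \<and> (\<forall>b\<in>idealsI act. annR act (annG act (extideal b)) = b)
    \<and> (\<forall>b\<in>idealsI act. annG act (extideal b) \<in> specAnn act)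
    \<and> (\<forall>N\<in>specAnn act. \<forall>N'\<in>specAnn act. N \<subseteq> N' \<longleftrightarrow> annR act N' \<subseteq> annR act N)
    \<and> (\<forall>b\<in>idealsI act. \<forall>b'\<in>idealsI act.
         b \<subseteq> b' \<longleftrightarrow> annG act (extideal b') \<subseteq> annG act (extideal b))"
proof -
  have char_pos: "CHAR('r) > 0"
    using assms(2,3) prime_gt_0_nat by blast
  note module = assms(4) and torsion_free = assms(5)
  note inverse_left = annG_extideal_annR[OF module char_pos torsion_free]
    and inverse_right = annR_annG_extideal[OF module char_pos]
    and maps_to = annR_mem_idealsI[OF module char_pos torsion_free]
    and maps_from = annG_extideal_mem_specAnn[OF module char_pos]
  have bij: "bij_betw (annR act) (specAnn act) (idealsI act)"
    by (rule bij_betw_byWitness[where f' = "\<lambda>b. annG act (extideal b)"])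
      (simp_all add: image_subset_iff inverse_left inverse_right maps_to maps_from)
  show ?thesis
  proof (intro conjI ballI)
    fix N N' assume "N \<in> specAnn act" "N' \<in> specAnn act"
    then show "N \<subseteq> N' \<longleftrightarrow> annR act N' \<subseteq> annR act N"
      by (rule antimono_inverse_le_iff[OF antimono_annR antimono_annG_extideal inverse_left inverse_left])
  next
    fix b b' assume "b \<in> idealsI act" "b' \<in> idealsI act"
    then show "b \<subseteq> b' \<longleftrightarrow> annG act (extideal b') \<subseteq> annG act (extideal b)"
      by (rule antimono_inverse_le_iff[OF antimono_annG_extideal antimono_annR inverse_right inverse_right])
  qed (rule bij annR_eq_const_grann[OF module char_pos] inverse_left inverse_right maps_from, assumption?)+
qed

end
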